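(* Let $Q$ be a finite set with $|Q|\ge 2$, and let $\mathrm{sel}(Q)$ be the smallest cardinality of a selective family for $Q$. If $m$ is the least positive integer such that $|Q|\le\binom{m}{\lfloor m/2\rfloor}$, then $\mathrm{sel}(Q)=m$.
   Context: A family $\mathscr{S}=\{S_i:i\in I\}$ of distinct nonempty subsets of $Q$ is selective for $Q$ if for every $q\in Q$ there is a nonempty $I(q)\subseteq I$ with $\{q\}=\bigcap_{i\in I(q)}S_i$. (The family of all singletons $\{q\}$, $q\in Q$, is always selective, so $\mathrm{sel}(Q)$ is well defined.) *)

theory Defs
  imports Main
begin

text \<open>A family of distinct nonempty subsets of Q (represented as a set of sets,
so distinctness is automatic) is selective for Q if every singleton {q}, q in Q,
is the intersection of some nonempty subfamily.\<close>
definition selective :: "'a set set \<Rightarrow> 'a set \<Rightarrow> bool" where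
  "selective F Q \<longleftrightarrow>
     (\<forall>S\<in>F. S \<noteq> {} \<and> S \<subseteq> Q) \<and>
     (\<forall>q\<in>Q. \<exists>G. G \<noteq> {} \<and> G \<subseteq> F \<and> \<Inter>G = {q})"

definition sel :: "'a set \<Rightarrow> nat" where
  "sel Q = (LEAST n. \<exists>F. finite F \<and> selective F Q \<and> card F = n)"

end

theory Submission
  imports Defs "HOL-Combinatorics.Multiset_Permutations"
begin

text \<open>
  The trace \<open>{S \<in> F. q \<in> S}\<close> of a point determines which members of \<open>F\<close> contain it.
  Selectivity forces that no trace is contained in another, so the traces
  form an antichain in the power set of \<open>F\<close>, and Sperner's theorem gives
  \<open>|Q| \<le> binom |F| \<lfloor>|F|/2\<rfloor>\<close>. Conversely, coding the points of \<open>Q\<close> injectively by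
  \<open>\<lfloor>m/2\<rfloor>\<close>-subsets of \<open>m\<close> coordinates, the \<open>m\<close> sets \<open>{q. i \<in> code q}\<close> form a selective
  family, because equal-size codes are pairwise incomparable.
\<close>

lemma card_permutations_with_prefix_set:
  assumes "finite U" and "X \<subseteq> U"
  shows "card {xs \<in> permutations_of_set U. set (take (card X) xs) = X}
         = fact (card X) * fact (card U - card X)"
proof -
  have "finite X" using assms finite_subset by blast
  let ?append = "\<lambda>(ys, zs). ys @ zs"
  let ?D = "permutations_of_set X \<times> permutations_of_set (U - X)"
  have length_perm: "length ys = card X" if "ys \<in> permutations_of_set X" for ys
    using that by (auto simp: permutations_of_set_def distinct_card[symmetric])
  have "inj_on ?append ?D"
    by (rule inj_onI) (auto dest!: length_perm simp: append_eq_append_conv)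
  moreover have "?append ` ?D = {xs \<in> permutations_of_set U. set (take (card X) xs) = X}"
  proof (intro equalityI subsetI)
    fix xs assume "xs \<in> ?append ` ?D"
    then obtain ys zs where ys: "ys \<in> permutations_of_set X"
      and zs: "zs \<in> permutations_of_set (U - X)" and xs: "xs = ys @ zs" by auto
    then show "xs \<in> {xs \<in> permutations_of_set U. set (take (card X) xs) = X}"
      using length_perm[OF ys] \<open>X \<subseteq> U\<close> by (auto simp: permutations_of_set_def)
  next
    fix xs assume "xs \<in> {xs \<in> permutations_of_set U. set (take (card X) xs) = X}"
    then have xs: "xs \<in> permutations_of_set U" "set (take (card X) xs) = X" by auto
    then have "distinct xs" "set xs = U" by (auto simp: permutations_of_set_def)
    have "set (take (card X) xs) \<inter> set (drop (card X) xs) = {}"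
      using set_take_disj_set_drop_if_distinct[OF \<open>distinct xs\<close>, of "card X" "card X"] by simp
    moreover have "set (take (card X) xs) \<union> set (drop (card X) xs) = U"
      using \<open>set xs = U\<close> by (metis append_take_drop_id set_append)
    ultimately have "(take (card X) xs, drop (card X) xs) \<in> ?D"
      using xs \<open>distinct xs\<close> by (auto simp: permutations_of_set_def)
    then show "xs \<in> ?append ` ?D"
      by (intro image_eqI[of _ _ "(take (card X) xs, drop (card X) xs)"]) auto
  qed
  ultimately show ?thesis
    using card_image \<open>finite X\<close> assms by (fastforce simp: card_cartesian_product card_Diff_subset)
qed

text \<open>
  Lubell's proof: the permutations of \<open>U\<close> starting with an enumeration of a member of
  the antichain are disjoint for distinct members, and each such class has at least
  \<open>\<lfloor>n/2\<rfloor>! \<lceil>n/2\<rceil>!\<close> elements.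
\<close>
theorem sperner:
  assumes "finite U" and "A \<subseteq> Pow U"
    and antichain: "\<And>X Y. X \<in> A \<Longrightarrow> Y \<in> A \<Longrightarrow> X \<subseteq> Y \<Longrightarrow> X = Y"
  shows "card A \<le> card U choose (card U div 2)"
proof -
  define n where "n = card U"
  define M :: nat where "M = fact (n div 2) * fact (n - n div 2)"
  define C where "C X = {xs \<in> permutations_of_set U. set (take (card X) xs) = X}" for X
  have "finite A" using assms by (meson finite_Pow_iff finite_subset)
  have M_binomial: "M * (n choose (n div 2)) = fact n"
    using binomial_fact_lemma[of "n div 2" n] by (simp add: M_def)
  have card_C: "M \<le> card (C X)" if "X \<in> A" for X
  proof -
    have "X \<subseteq> U" using that assms by auto
    then have k: "card X \<le> n" using \<open>finite U\<close> card_mono n_def by blast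
    have "card (C X) * (n choose card X) = fact n"
      using card_permutations_with_prefix_set[OF \<open>finite U\<close> \<open>X \<subseteq> U\<close>] binomial_fact_lemma[OF k]
      by (simp add: C_def n_def)
    moreover have "n choose card X \<le> n choose (n div 2)" by (rule binomial_maximum)
    moreover have "0 < n choose card X" using k by simp
    ultimately show ?thesis using M_binomial
      by (metis mult.commute not_le nat_mult_less_cancel_disj)
  qed
  have C_disjoint: "C X \<inter> C Y = {}" if "X \<in> A" "Y \<in> A" "X \<noteq> Y" for X Y
  proof (rule ccontr)
    assume "C X \<inter> C Y \<noteq> {}"
    then obtain xs where "set (take (card X) xs) = X" "set (take (card Y) xs) = Y"
      unfolding C_def by auto
    then have "X \<subseteq> Y \<or> Y \<subseteq> X"
      by (metis nat_le_linear set_take_subset_set_take)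
    then show False using antichain that by blast
  qed
  have "card A * M \<le> (\<Sum>X\<in>A. card (C X))"
    using card_C sum_mono[of A "\<lambda>_. M" "\<lambda>X. card (C X)"] by simp
  also have "\<dots> = card (\<Union>X\<in>A. C X)"
    using card_UN_disjoint[OF \<open>finite A\<close>, of C] C_disjoint by (simp add: C_def)
  also have "\<dots> \<le> card (permutations_of_set U)"
    by (rule card_mono) (auto simp: C_def)
  also have "\<dots> = (n choose (n div 2)) * M"
    using \<open>finite U\<close> M_binomial by (simp add: n_def mult.commute)
  finally show ?thesis by (simp add: M_def n_def)
qed

lemma selective_separates:
  assumes "selective F Q" and "q \<in> Q" and "p \<noteq> q"
  shows "\<exists>S\<in>F. q \<in> S \<and> p \<notin> S"
proof -
  obtain G where "G \<subseteq> F" "\<Inter>G = {q}"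
    using assms(1,2) unfolding selective_def by blast
  then have "p \<notin> \<Inter>G" "q \<in> \<Inter>G" using \<open>p \<noteq> q\<close> by auto
  then show ?thesis using \<open>G \<subseteq> F\<close> by auto
qed

lemma selective_family_nonempty:
  assumes "selective F Q" and "Q \<noteq> {}"
  shows "F \<noteq> {}"
  using assms unfolding selective_def by fastforce

lemma card_le_central_binomial_if_selective:
  assumes "finite F" and "selective F Q"
  shows "card Q \<le> card F choose (card F div 2)"
proof -
  define trace where "trace q = {S \<in> F. q \<in> S}" for q
  have trace_incomparable: "\<not> trace q \<subseteq> trace p" if "q \<in> Q" "p \<noteq> q" for p q
    using selective_separates[OF assms(2) that] unfolding trace_def by auto
  have "inj_on trace Q"
    by (rule inj_onI) (metis trace_incomparable order_refl)
  moreover have "card (trace ` Q) \<le> card F choose (card F div 2)"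
  proof (rule sperner[OF \<open>finite F\<close>])
    show "trace ` Q \<subseteq> Pow F" by (auto simp: trace_def)
    show "X = Y" if "X \<in> trace ` Q" "Y \<in> trace ` Q" "X \<subseteq> Y" for X Y
      using that trace_incomparable by (metis imageE)
  qed
  ultimately show ?thesis by (simp add: card_image)
qed

lemma selective_coordinate_sets:
  assumes code_sub: "\<And>q. q \<in> Q \<Longrightarrow> code q \<subseteq> I"
    and code_nonempty: "\<And>q. q \<in> Q \<Longrightarrow> code q \<noteq> {}"
    and code_antichain: "\<And>p q. p \<in> Q \<Longrightarrow> q \<in> Q \<Longrightarrow> code q \<subseteq> code p \<Longrightarrow> p = q"
  shows "selective ((\<lambda>i. {q \<in> Q. i \<in> code q}) ` I - {{}}) Q"
  unfolding selective_def
proof (intro conjI ballI)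
  let ?coord = "\<lambda>i. {q \<in> Q. i \<in> code q}"
  let ?F = "?coord ` I - {{}}"
  show "S \<noteq> {}" "S \<subseteq> Q" if "S \<in> ?F" for S using that by auto
  fix q assume "q \<in> Q"
  let ?G = "?coord ` code q"
  have "?G \<subseteq> ?F" using \<open>q \<in> Q\<close> code_sub by auto
  moreover have "?G \<noteq> {}" using code_nonempty[OF \<open>q \<in> Q\<close>] by simp
  moreover have "\<Inter>?G = {q}"
  proof
    show "{q} \<subseteq> \<Inter>?G" using \<open>q \<in> Q\<close> by auto
    show "\<Inter>?G \<subseteq> {q}"
    proof
      fix p assume "p \<in> \<Inter>?G"
      then have "p \<in> Q" "code q \<subseteq> code p"
        using code_nonempty[OF \<open>q \<in> Q\<close>] by auto
      then show "p \<in> {q}" using code_antichain \<open>q \<in> Q\<close> by auto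
    qed
  qed
  ultimately show "\<exists>G. G \<noteq> {} \<and> G \<subseteq> ?F \<and> \<Inter>G = {q}"
    by (intro exI[of _ ?G] conjI)
qed

lemma ex_selective_family_card_le:
  assumes "finite Q" and "0 < k" and "card Q \<le> m choose k"
  shows "\<exists>F. finite F \<and> selective F Q \<and> card F \<le> m"
proof -
  define B where "B = {A. A \<subseteq> {..<m} \<and> card A = k}"
  have "finite B" unfolding B_def by (rule finite_subset[of _ "Pow {..<m}"]) auto
  moreover have "card Q \<le> card B"
    using assms n_subsets[of "{..<m}" k] by (simp add: B_def)
  ultimately obtain code where code: "code ` Q \<subseteq> B" "inj_on code Q"
    using card_le_inj[OF \<open>finite Q\<close>] by blast
  have code_card: "code q \<subseteq> {..<m}" "card (code q) = k" if "q \<in> Q" for q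
    using code that by (auto simp: B_def)
  let ?F = "(\<lambda>i. {q \<in> Q. i \<in> code q}) ` {..<m} - {{}}"
  have "selective ?F Q"
  proof (rule selective_coordinate_sets)
    show "code q \<subseteq> {..<m}" "code q \<noteq> {}" if "q \<in> Q" for q
      using code_card[OF that] \<open>0 < k\<close> by auto
    show "p = q" if "p \<in> Q" "q \<in> Q" "code q \<subseteq> code p" for p q
      using that code_card card_subset_eq[of "code p" "code q"] finite_subset
        inj_onD[OF code(2)] by (metis finite_lessThan)
  qed
  moreover have "card ?F \<le> m"
    using order_trans[OF card_Diff1_le card_image_le[OF finite_lessThan]] by simp
  moreover have "finite ?F" by simp
  ultimately show ?thesis by (intro exI[of _ ?F] conjI)
qed

theorem mainTheorem8:
  fixes Q :: "'a set" and m :: nat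
  assumes "finite Q" and "card Q \<ge> 2"
    and "m = (LEAST k::nat. 0 < k \<and> card Q \<le> k choose (k div 2))"
  shows "sel Q = m"
proof -
  let ?P = "\<lambda>k::nat. 0 < k \<and> card Q \<le> k choose (k div 2)"
  have "?P (card Q)" using assms(2) binomial_maximum[of "card Q" 1] by simp
  then have Pm: "?P m" unfolding assms(3) by (rule LeastI)
  have m_least: "m \<le> k" if "?P k" for k using Least_le[of ?P, OF that] assms(3) by simp
  have "m \<noteq> 1" using Pm assms(2) by auto
  with Pm have "0 < m div 2" by (simp add: div_greater_zero_iff)
  with Pm obtain F where F: "finite F" "selective F Q" "card F \<le> m"
    using ex_selective_family_card_le[OF \<open>finite Q\<close>] by blast
  have lower: "m \<le> card F" if "finite F" "selective F Q" for F
  proof (rule m_least, rule conjI)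
    have "Q \<noteq> {}" using assms(2) by auto
    with that show "0 < card F"
      using selective_family_nonempty card_gt_0_iff by blast
    show "card Q \<le> card F choose (card F div 2)"
      using card_le_central_binomial_if_selective[OF that] .
  qed
  show ?thesis
    unfolding sel_def
  proof (rule Least_equality)
    show "\<exists>F. finite F \<and> selective F Q \<and> card F = m"
      using F lower[OF F(1,2)] by (intro exI[of _ F]) simp
  qed (use lower in blast)
qed

end
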